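(* Let $X$ be a Banach space, let $\mu$ be a measure of noncompactness on $X$, and let $A$ be a nonempty, closed, bounded and convex subset of $X$. Let $T:A\to A$ be a continuous operator such that for every nonempty subset $Y\subseteq A$, \[ \Phi\left(\int_0^{\mu(TY)}\varphi(\gamma)\,d\gamma\right)\leqslant \Psi\left(\int_0^{\mu(Y)}\varphi(\gamma)\,d\gamma\right), \] where: (i) $\Psi:\mathbb{R}^+\to\mathbb{R}^+$ is a nondecreasing and concave function such that $\lim_{n\to\infty}\Psi^n(t)=0$ for all $t\geqslant 0$ (here $\Psi^n$ denotes the $n$-th iterate of $\Psi$); (ii) $\Phi:\mathbb{R}^+\to\mathbb{R}^+$ is a nondecreasing subadditive function such that $\Phi(t)\geqslant t$ for all $t\ge 0$ and, for every sequence $(x_n)$ in $\mathbb{R}^+$, $\lim_{n\to\infty}\Phi(x_n)=0$ if and only if $\lim_{n\to\infty}x_n=0$; (iii) $\varphi:[0,+\infty)\to[0,+\infty)$ is summable (Lebesgue integrable with finite integral) on each compact subset of $[0,+\infty)$ and $\int_0^{\epsilon}\varphi(\omega)\,d\omega>0$ for each $\epsilon>0$. Then $T$ has at least one fixed point in $A$.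
   Context: $\mathcal{B}_X$ denotes the family of nonempty bounded subsets of $X$, $\overline{B}$ the closure and $\mathrm{Conv}\,B$ the closed convex hull of $B$. A measure of noncompactness on $X$ is a map $\mu:\mathcal{B}_X\to[0,\infty)$ such that: (1) $\mu(B)=0$ iff $B$ is precompact; (2) $B\subseteq C\Rightarrow \mu(B)\le\mu(C)$; (3) $\mu(\overline{B})=\mu(B)$; (4) $\mu(\mathrm{Conv}\,B)=\mu(B)$; (5) $\mu(\lambda B+(1-\lambda)C)\le\lambda\mu(B)+(1-\lambda)\mu(C)$ for $\lambda\in[0,1]$; (6) if $(B_n)$ is a decreasing sequence ($B_{n+1}\subseteq B_n$) of closed sets in $\mathcal{B}_X$ with $\lim_n\mu(B_n)=0$, then $\bigcap_n B_n$ is nonempty and precompact. A function $\Phi$ is subadditive if $\Phi(s+t)\le\Phi(s)+\Phi(t)$ for all $s,t\ge0$. *)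

theory Defs
  imports "HOL-Analysis.Analysis"
begin

abbreviation precompact :: "'a::metric_space set \<Rightarrow> bool" where
  "precompact B \<equiv> totally_bounded B"

definition bdd_sets :: "'a::real_normed_vector set set" where
  "bdd_sets = {B. B \<noteq> {} \<and> bounded B}"

definition Conv :: "'a::real_normed_vector set \<Rightarrow> 'a set" where
  "Conv B = closure (convex hull B)"

definition set_comb :: "real \<Rightarrow> 'a::real_vector set \<Rightarrow> 'a set \<Rightarrow> 'a set" where
  "set_comb lam B C = {lam *\<^sub>R b + (1 - lam) *\<^sub>R c | b c. b \<in> B \<and> c \<in> C}"

text \<open>A measure of noncompactness; mu is only constrained on nonempty bounded sets.\<close>
definition measure_of_noncompactness :: "('a::real_normed_vector set \<Rightarrow> real) \<Rightarrow> bool" where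
  "measure_of_noncompactness mu \<longleftrightarrow>
     (\<forall>B\<in>bdd_sets. mu B \<ge> 0) \<and>
     (\<forall>B\<in>bdd_sets. mu B = 0 \<longleftrightarrow> precompact B) \<and>
     (\<forall>B\<in>bdd_sets. \<forall>C\<in>bdd_sets. B \<subseteq> C \<longrightarrow> mu B \<le> mu C) \<and>
     (\<forall>B\<in>bdd_sets. mu (closure B) = mu B) \<and>
     (\<forall>B\<in>bdd_sets. mu (Conv B) = mu B) \<and>
     (\<forall>B\<in>bdd_sets. \<forall>C\<in>bdd_sets. \<forall>lam\<in>{0..1}.
        mu (set_comb lam B C) \<le> lam * mu B + (1 - lam) * mu C) \<and>
     (\<forall>Bs :: nat \<Rightarrow> 'a set.
        (\<forall>n. Bs n \<in> bdd_sets \<and> closed (Bs n) \<and> Bs (Suc n) \<subseteq> Bs n) \<and>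
        (\<lambda>n. mu (Bs n)) \<longlonglongrightarrow> 0 \<longrightarrow>
        (\<Inter>n. Bs n) \<noteq> {} \<and> precompact (\<Inter>n. Bs n))"

end

theory Submission
  imports Defs
begin

(*
  Put \<theta> s = integral {0..s} \<phi>. Since \<Phi> t \<ge> t, the hypothesis gives
  \<theta> (\<mu> (T ` Y)) \<le> \<Psi> (\<theta> (\<mu> Y)). Along the decreasing sequence A_0 = A,
  A_(k+1) = Conv (T ` A_k), whose measures satisfy \<mu> A_(k+1) = \<mu> (T ` A_k), this gives
  \<theta> (\<mu> A_k) \<le> \<Psi>^k (\<theta> (\<mu> A)) \<longrightarrow> 0, and as \<theta> is positive away from 0, \<mu> A_k \<longrightarrow> 0.
  By the Cantor-type axiom of \<mu> the intersection of the A_k is then a nonempty compact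
  convex set mapped into itself by T, and Schauder's theorem applies.

  Schauder's theorem is proved by approximation: a compact convex K lies within \<epsilon> of the
  polytope spanned by a finite \<epsilon>-net, and the induced self-map of the standard simplex has
  approximate fixed points by Kuhn's combinatorial lemma on the cube.
*)

section \<open>Approximate fixed points on the cube and the simplex\<close>

(* Points of the n-cube are functions nat \<Rightarrow> real whose coordinates from n on are ignored. *)
definition unit_cube :: "nat \<Rightarrow> (nat \<Rightarrow> real) set" where
  "unit_cube n = {x. \<forall>i<n. 0 \<le> x i \<and> x i \<le> 1}"

definition uniformly_continuous_coords ::
    "nat \<Rightarrow> (nat \<Rightarrow> real) set \<Rightarrow> ((nat \<Rightarrow> real) \<Rightarrow> nat \<Rightarrow> real) \<Rightarrow> bool" where
  "uniformly_continuous_coords n S h \<longleftrightarrow>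
     (\<forall>e>0. \<exists>d>0. \<forall>t\<in>S. \<forall>t'\<in>S.
        (\<forall>i<n. \<bar>t i - t' i\<bar> < d) \<longrightarrow> (\<forall>i<n. \<bar>h t i - h t' i\<bar> < e))"

lemma grid_neighbour_in_cube:
  fixes q r :: "nat \<Rightarrow> nat" and p :: nat
  assumes p: "0 < p" and q: "\<forall>i<n. q i < p" and r: "\<forall>j<n. q j \<le> r j \<and> r j \<le> q j + 1"
  shows "(\<lambda>j. real (r j) / real p) \<in> unit_cube n \<and>
    (\<forall>j<n. \<bar>real (r j) / real p - real (q j) / real p\<bar> \<le> 1 / real p)"
proof -
  have "\<forall>j<n. r j \<le> p" using r q by (metis Suc_eq_plus1 Suc_leI order_trans)
  then have "(\<lambda>j. real (r j) / real p) \<in> unit_cube n" using p by (simp add: unit_cube_def)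
  moreover have "\<bar>real (r j) / real p - real (q j) / real p\<bar> \<le> 1 / real p" if "j < n" for j
    using that r p by (auto simp: abs_le_iff diff_divide_distrib[symmetric] divide_right_mono)
  ultimately show ?thesis by blast
qed

lemma cube_sperner_labelling:
  fixes f :: "(nat \<Rightarrow> real) \<Rightarrow> nat \<Rightarrow> real"
  assumes f: "\<forall>x\<in>unit_cube n. f x \<in> unit_cube n"
  shows "\<exists>l :: (nat \<Rightarrow> real) \<Rightarrow> nat \<Rightarrow> nat. (\<forall>x i. l x i = 0 \<or> l x i = 1) \<and>
      (\<forall>x i. x \<in> unit_cube n \<and> i < n \<and> x i = 0 \<longrightarrow> l x i = 0) \<and>
      (\<forall>x i. x \<in> unit_cube n \<and> i < n \<and> x i = 1 \<longrightarrow> l x i = 1) \<and>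
      (\<forall>x i. x \<in> unit_cube n \<and> i < n \<and> l x i = 0 \<longrightarrow> x i \<le> f x i) \<and>
      (\<forall>x i. x \<in> unit_cube n \<and> i < n \<and> l x i = 1 \<longrightarrow> f x i \<le> x i)"
proof -
  have "\<exists>l. (\<forall>x i. l x i \<le> (1::nat)) \<and>
      (\<forall>x i. x \<in> unit_cube n \<and> i < n \<and> x i = 0 \<longrightarrow> l x i = 0) \<and>
      (\<forall>x i. x \<in> unit_cube n \<and> i < n \<and> x i = 1 \<longrightarrow> l x i = 1) \<and>
      (\<forall>x i. x \<in> unit_cube n \<and> i < n \<and> l x i = 0 \<longrightarrow> x i \<le> f x i) \<and>
      (\<forall>x i. x \<in> unit_cube n \<and> i < n \<and> l x i = 1 \<longrightarrow> f x i \<le> x i)"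
    by (rule kuhn_labelling_lemma') (use f in \<open>auto simp: unit_cube_def\<close>)
  moreover have le_one: "(k :: nat) \<le> 1 \<longleftrightarrow> k = 0 \<or> k = 1" for k
    by auto
  ultimately show ?thesis by (simp only: le_one)
qed

(* Label a point by 0 in coordinate i if f moves it up there and by 1 if it moves it down;
   Kuhn's lemma gives a cell of the grid of mesh 1/p carrying both labels in every coordinate. *)
lemma kuhn_cube_cell:
  fixes f :: "(nat \<Rightarrow> real) \<Rightarrow> nat \<Rightarrow> real" and p :: nat
  assumes f: "\<forall>x\<in>unit_cube n. f x \<in> unit_cube n" and p: "0 < p"
  shows "\<exists>z\<in>unit_cube n. \<forall>i<n. \<exists>r\<in>unit_cube n. \<exists>s\<in>unit_cube n.
           (\<forall>j<n. \<bar>r j - z j\<bar> \<le> 1 / real p \<and> \<bar>s j - z j\<bar> \<le> 1 / real p) \<and>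
           r i \<le> f r i \<and> f s i \<le> s i"
proof -
  obtain l :: "(nat \<Rightarrow> real) \<Rightarrow> nat \<Rightarrow> nat" where
    l01: "\<forall>x i. l x i = 0 \<or> l x i = 1" and
    l_zero: "\<forall>x i. x \<in> unit_cube n \<and> i < n \<and> x i = 0 \<longrightarrow> l x i = 0" and
    l_one: "\<forall>x i. x \<in> unit_cube n \<and> i < n \<and> x i = 1 \<longrightarrow> l x i = 1" and
    l_up: "\<forall>x i. x \<in> unit_cube n \<and> i < n \<and> l x i = 0 \<longrightarrow> x i \<le> f x i" and
    l_down: "\<forall>x i. x \<in> unit_cube n \<and> i < n \<and> l x i = 1 \<longrightarrow> f x i \<le> x i"
    using cube_sperner_labelling[OF f] by blast
  define grid :: "(nat \<Rightarrow> nat) \<Rightarrow> nat \<Rightarrow> real" where "grid x = (\<lambda>j. real (x j) / real p)" for x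
  have grid_cube: "grid x \<in> unit_cube n" if "\<forall>i<n. x i \<le> p" for x
    using that p by (simp add: unit_cube_def grid_def)
  obtain q where q: "\<forall>i<n. q i < p" and cell: "\<forall>i<n. \<exists>r s.
      (\<forall>j<n. q j \<le> r j \<and> r j \<le> q j + 1) \<and> (\<forall>j<n. q j \<le> s j \<and> s j \<le> q j + 1) \<and>
      l (grid r) i \<noteq> l (grid s) i"
    by (rule kuhn_lemma[OF p, of n "\<lambda>x. l (grid x)"])
      (use l01 l_zero l_one grid_cube p in \<open>auto simp: grid_def\<close>)
  have near: "grid r \<in> unit_cube n \<and> (\<forall>j<n. \<bar>grid r j - grid q j\<bar> \<le> 1 / real p)"
    if "\<forall>j<n. q j \<le> r j \<and> r j \<le> q j + 1" for r
    using grid_neighbour_in_cube[OF p q that] by (simp add: grid_def)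
  have "grid q \<in> unit_cube n" using q grid_cube by (simp add: less_imp_le)
  moreover have "\<exists>r\<in>unit_cube n. \<exists>s\<in>unit_cube n.
      (\<forall>j<n. \<bar>r j - grid q j\<bar> \<le> 1 / real p \<and> \<bar>s j - grid q j\<bar> \<le> 1 / real p) \<and>
      r i \<le> f r i \<and> f s i \<le> s i" if i: "i < n" for i
  proof -
    obtain r s where r: "\<forall>j<n. q j \<le> r j \<and> r j \<le> q j + 1"
      and s: "\<forall>j<n. q j \<le> s j \<and> s j \<le> q j + 1" and rs: "l (grid r) i \<noteq> l (grid s) i"
      using cell i by blast
    from rs consider "l (grid r) i = 0" "l (grid s) i = 1" | "l (grid s) i = 0" "l (grid r) i = 1"
      using l01 by metis
    then show ?thesis
    proof cases
      case 1
      then have "grid r i \<le> f (grid r) i" "f (grid s) i \<le> grid s i"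
        using near[OF r] near[OF s] l_up l_down i by auto
      then show ?thesis using near[OF r] near[OF s] by blast
    next
      case 2
      then have "grid s i \<le> f (grid s) i" "f (grid r) i \<le> grid r i"
        using near[OF r] near[OF s] l_up l_down i by auto
      then show ?thesis using near[OF r] near[OF s] by blast
    qed
  qed
  ultimately show ?thesis by blast
qed

lemma approx_fixpoint_cube:
  assumes f: "\<forall>x\<in>unit_cube n. f x \<in> unit_cube n"
    and uc: "uniformly_continuous_coords n (unit_cube n) f" and e: "0 < e"
  shows "\<exists>z\<in>unit_cube n. \<forall>i<n. \<bar>f z i - z i\<bar> < e"
proof -
  obtain d where d: "d > 0" and fd: "\<forall>t\<in>unit_cube n. \<forall>t'\<in>unit_cube n.
      (\<forall>i<n. \<bar>t i - t' i\<bar> < d) \<longrightarrow> (\<forall>i<n. \<bar>f t i - f t' i\<bar> < e / 3)"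
    using uc e unfolding uniformly_continuous_coords_def by (metis zero_less_divide_iff zero_less_numeral)
  obtain p :: nat where p: "max (1 / d) (3 / e) < real p"
    using reals_Archimedean2 by blast
  moreover have "0 < 1 / d" using d by simp
  ultimately have p0: "0 < p" by linarith
  have pd: "1 / real p < d" and pe: "1 / real p < e / 3"
    using p p0 d e by (simp_all add: field_simps)
  obtain z where z: "z \<in> unit_cube n" and cell: "\<forall>i<n. \<exists>r\<in>unit_cube n. \<exists>s\<in>unit_cube n.
      (\<forall>j<n. \<bar>r j - z j\<bar> \<le> 1 / real p \<and> \<bar>s j - z j\<bar> \<le> 1 / real p) \<and>
      r i \<le> f r i \<and> f s i \<le> s i"
    using kuhn_cube_cell[OF f p0] by blast
  have "\<bar>f z i - z i\<bar> < e" if i: "i < n" for i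
  proof -
    obtain r s where rs: "r \<in> unit_cube n" "s \<in> unit_cube n"
      and near: "\<forall>j<n. \<bar>r j - z j\<bar> \<le> 1 / real p \<and> \<bar>s j - z j\<bar> \<le> 1 / real p"
      and up: "r i \<le> f r i" and down: "f s i \<le> s i"
      using cell i by blast
    have "\<bar>f r i - f z i\<bar> < e / 3" "\<bar>f s i - f z i\<bar> < e / 3"
      using fd rs z near pd i by (meson le_less_trans)+
    moreover have "\<bar>r i - z i\<bar> < e / 3" "\<bar>s i - z i\<bar> < e / 3"
      using near pe i by (meson le_less_trans)+
    ultimately show ?thesis using up down by (simp only: abs_less_iff) linarith
  qed
  then show ?thesis using z by blast
qed

definition corner_simplex :: "nat \<Rightarrow> (nat \<Rightarrow> real) set" where
  "corner_simplex n = {x \<in> unit_cube n. (\<Sum>i<n. x i) \<le> 1}"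

definition simplex_retraction :: "nat \<Rightarrow> (nat \<Rightarrow> real) \<Rightarrow> nat \<Rightarrow> real" where
  "simplex_retraction n t i = t i / max 1 (\<Sum>j<n. t j)"

lemma simplex_retraction_in:
  assumes "t \<in> unit_cube n"
  shows "simplex_retraction n t \<in> corner_simplex n"
proof -
  have "(\<Sum>i<n. simplex_retraction n t i) = (\<Sum>j<n. t j) / max 1 (\<Sum>j<n. t j)"
    by (simp add: simplex_retraction_def sum_divide_distrib)
  also have "\<dots> \<le> 1" by simp
  finally show ?thesis
    using assms by (auto simp: corner_simplex_def unit_cube_def simplex_retraction_def
        divide_le_eq_1 intro: order_trans)
qed

lemma simplex_retraction_id: "t \<in> corner_simplex n \<Longrightarrow> simplex_retraction n t = t"
  by (rule ext) (simp add: corner_simplex_def simplex_retraction_def max_absorb1)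

lemma abs_diff_divide_le:
  fixes t s a b :: real
  assumes "0 \<le> s" "s \<le> 1" "1 \<le> a" "1 \<le> b"
  shows "\<bar>t / a - s / b\<bar> \<le> \<bar>t - s\<bar> + \<bar>a - b\<bar>"
proof -
  have "t / a - s / b = (t - s) / a + s * (b - a) / (a * b)"
    using assms by (simp add: field_simps)
  moreover have "\<bar>(t - s) / a\<bar> \<le> \<bar>t - s\<bar>"
    using assms by (simp add: abs_divide divide_le_eq mult_le_cancel_left1)
  moreover have "\<bar>s * (b - a) / (a * b)\<bar> \<le> \<bar>a - b\<bar>"
  proof -
    have "1 \<le> a * b" using assms by (metis mult_mono mult_1 zero_le_one order_trans)
    then have "s * \<bar>b - a\<bar> \<le> \<bar>b - a\<bar> * (a * b)"
      using assms by (metis abs_ge_zero mult.commute mult_left_le_one_le mult_right_mono order_trans)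
    then show ?thesis
      using assms \<open>1 \<le> a * b\<close> by (simp add: abs_mult abs_divide divide_le_eq abs_minus_commute)
  qed
  ultimately show ?thesis by (metis abs_triangle_ineq add_mono order_trans)
qed

lemma simplex_retraction_lipschitz:
  assumes t: "t \<in> unit_cube n" "t' \<in> unit_cube n" and close: "\<forall>i<n. \<bar>t i - t' i\<bar> \<le> \<delta>"
    and i: "i < n"
  shows "\<bar>simplex_retraction n t i - simplex_retraction n t' i\<bar> \<le> (real n + 1) * \<delta>"
proof -
  have "\<bar>(\<Sum>j<n. t j) - (\<Sum>j<n. t' j)\<bar> \<le> (\<Sum>j<n. \<bar>t j - t' j\<bar>)"
    by (metis sum_abs sum_subtractf)
  also have "\<dots> \<le> real n * \<delta>"
    using sum_mono[of "{..<n}" "\<lambda>j. \<bar>t j - t' j\<bar>" "\<lambda>_. \<delta>"] close by simp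
  moreover have "\<bar>max 1 a - max 1 b\<bar> \<le> \<bar>a - b\<bar>" for a b :: real
    by (simp add: max_def)
  ultimately have sum_close: "\<bar>max 1 (\<Sum>j<n. t j) - max 1 (\<Sum>j<n. t' j)\<bar> \<le> real n * \<delta>"
    by (meson order_trans)
  have "\<bar>simplex_retraction n t i - simplex_retraction n t' i\<bar>
      \<le> \<bar>t i - t' i\<bar> + \<bar>max 1 (\<Sum>j<n. t j) - max 1 (\<Sum>j<n. t' j)\<bar>"
    unfolding simplex_retraction_def
    by (rule abs_diff_divide_le) (use t i in \<open>auto simp: unit_cube_def\<close>)
  also have "\<dots> \<le> \<delta> + real n * \<delta>" using close i sum_close by (meson add_mono)
  finally show ?thesis by (simp add: algebra_simps)
qed

lemma uniformly_continuous_coords_comp_retraction: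
  assumes uc: "uniformly_continuous_coords n (corner_simplex n) h"
  shows "uniformly_continuous_coords n (unit_cube n) (h \<circ> simplex_retraction n)"
  unfolding uniformly_continuous_coords_def
proof (intro allI impI)
  let ?r = "simplex_retraction n"
  fix e :: real assume "0 < e"
  then obtain d where d: "0 < d" and hd: "\<forall>t\<in>corner_simplex n. \<forall>t'\<in>corner_simplex n.
      (\<forall>i<n. \<bar>t i - t' i\<bar> < d) \<longrightarrow> (\<forall>i<n. \<bar>h t i - h t' i\<bar> < e)"
    using uc unfolding uniformly_continuous_coords_def by blast
  have shrink: "(real n + 1) * (d / (real n + 2)) < d"
    using d by (simp add: field_simps)
  have "\<forall>i<n. \<bar>h (?r t) i - h (?r t') i\<bar> < e"
    if t: "t \<in> unit_cube n" "t' \<in> unit_cube n" and close: "\<forall>i<n. \<bar>t i - t' i\<bar> < d / (real n + 2)"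
    for t t'
  proof -
    have "\<bar>?r t i - ?r t' i\<bar> < d" if "i < n" for i
      using simplex_retraction_lipschitz[OF t _ that, of "d / (real n + 2)"] close shrink
      by (simp add: less_imp_le)
    then show ?thesis using hd simplex_retraction_in t by blast
  qed
  then show "\<exists>d>0. \<forall>t\<in>unit_cube n. \<forall>t'\<in>unit_cube n. (\<forall>i<n. \<bar>t i - t' i\<bar> < d) \<longrightarrow>
      (\<forall>i<n. \<bar>(h \<circ> ?r) t i - (h \<circ> ?r) t' i\<bar> < e)"
    using d by (intro exI[of _ "d / (real n + 2)"]) auto
qed

lemma approx_fixpoint_simplex:
  assumes h: "\<forall>x\<in>corner_simplex n. h x \<in> corner_simplex n"
    and uc: "uniformly_continuous_coords n (corner_simplex n) h" and e: "0 < e"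
  shows "\<exists>z\<in>corner_simplex n. \<forall>i<n. \<bar>h z i - z i\<bar> < e"
proof -
  let ?r = "simplex_retraction n"
  have shrink: "(real n + 1) * (e / (real n + 2)) < e"
    using e by (simp add: field_simps)
  have simplex_cube: "corner_simplex n \<subseteq> unit_cube n"
    by (auto simp: corner_simplex_def)
  have maps: "\<forall>x\<in>unit_cube n. (h \<circ> ?r) x \<in> unit_cube n"
    using h simplex_cube simplex_retraction_in by auto
  have "0 < e / (real n + 2)" using e by simp
  then obtain t where t: "t \<in> unit_cube n"
    and fix_t: "\<forall>i<n. \<bar>h (?r t) i - t i\<bar> < e / (real n + 2)"
    using approx_fixpoint_cube[OF maps uniformly_continuous_coords_comp_retraction[OF uc]] by auto
  have s: "?r t \<in> corner_simplex n" using simplex_retraction_in[OF t] .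
  then have u: "h (?r t) \<in> corner_simplex n" using h by blast
  have "\<bar>h (?r t) i - ?r t i\<bar> < e" if "i < n" for i
  proof -
    have "\<bar>?r (h (?r t)) i - ?r t i\<bar> \<le> (real n + 1) * (e / (real n + 2))"
      using simplex_retraction_lipschitz[of "h (?r t)" n t "e / (real n + 2)" i] u t fix_t that
        simplex_cube by (auto simp: less_imp_le)
    then show ?thesis using simplex_retraction_id[OF u] shrink by simp
  qed
  then show ?thesis using s by blast
qed

section \<open>Schauder's fixed point theorem\<close>

(* The affine map sending the vertices 0 and e\<^sub>i of the corner simplex to y 0 and y (Suc i). *)
definition simplex_param :: "(nat \<Rightarrow> 'a::real_vector) \<Rightarrow> nat \<Rightarrow> (nat \<Rightarrow> real) \<Rightarrow> 'a" where
  "simplex_param y n t = y 0 + (\<Sum>i<n. t i *\<^sub>R (y (Suc i) - y 0))"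

lemma simplex_param_lipschitz:
  fixes y :: "nat \<Rightarrow> 'a::real_normed_vector"
  assumes "\<forall>i<n. \<bar>s i - s' i\<bar> \<le> d"
  shows "norm (simplex_param y n s - simplex_param y n s') \<le> d * (\<Sum>i<n. norm (y (Suc i) - y 0))"
proof -
  have "norm (simplex_param y n s - simplex_param y n s')
      = norm (\<Sum>i<n. (s i - s' i) *\<^sub>R (y (Suc i) - y 0))"
    by (simp add: simplex_param_def sum_subtractf scaleR_left_diff_distrib)
  also have "\<dots> \<le> (\<Sum>i<n. \<bar>s i - s' i\<bar> * norm (y (Suc i) - y 0))"
    by (rule order_trans[OF norm_sum]) simp
  also have "\<dots> \<le> (\<Sum>i<n. d * norm (y (Suc i) - y 0))"
    using assms by (intro sum_mono mult_right_mono) auto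
  finally show ?thesis by (simp add: sum_distrib_left)
qed

lemma simplex_param_barycentric:
  assumes "(\<Sum>j<Suc n. a j) = 1"
  shows "simplex_param y n (\<lambda>i. a (Suc i)) = (\<Sum>j<Suc n. a j *\<^sub>R y j)"
proof -
  have "a 0 = 1 - (\<Sum>i<n. a (Suc i))" using assms unfolding sum.lessThan_Suc_shift by simp
  moreover have "(\<Sum>j<Suc n. a j *\<^sub>R y j) = a 0 *\<^sub>R y 0 + (\<Sum>i<n. a (Suc i) *\<^sub>R y (Suc i))"
    by (rule sum.lessThan_Suc_shift)
  ultimately show ?thesis
    by (simp add: simplex_param_def scaleR_diff_right scaleR_left_diff_distrib sum_subtractf
        flip: scaleR_sum_left)
qed

lemma simplex_param_in_convex:
  assumes "convex K" "\<forall>j<Suc n. y j \<in> K" "t \<in> corner_simplex n"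
  shows "simplex_param y n t \<in> K"
proof -
  define a where "a j = (if j = 0 then 1 - (\<Sum>i<n. t i) else t (j - 1))" for j
  have a_sum: "(\<Sum>j<Suc n. a j) = 1" unfolding sum.lessThan_Suc_shift by (simp add: a_def)
  have "simplex_param y n t = (\<Sum>j<Suc n. a j *\<^sub>R y j)"
    using simplex_param_barycentric[OF a_sum, of y] by (simp add: a_def)
  also have "\<dots> \<in> K"
    using assms a_sum by (intro convex_sum) (auto simp: a_def corner_simplex_def unit_cube_def)
  finally show ?thesis .
qed

lemma shifted_weights_in_corner_simplex:
  assumes "\<And>j. 0 \<le> a j" "(\<Sum>j<Suc n. a j) = 1"
  shows "(\<lambda>i. a (Suc i)) \<in> corner_simplex n"
proof -
  have sum: "(\<Sum>i<n. a (Suc i)) = 1 - a 0"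
    using assms(2) unfolding sum.lessThan_Suc_shift by simp
  have "a (Suc i) \<le> (\<Sum>i<n. a (Suc i))" if "i < n" for i
    using that assms(1) by (intro member_le_sum) auto
  then have "a (Suc i) \<le> 1" if "i < n" for i
    using that sum assms(1)[of 0] by fastforce
  then show ?thesis
    using sum assms(1) by (simp add: corner_simplex_def unit_cube_def)
qed

lemma uniformly_continuous_comp_simplex_param:
  fixes y :: "nat \<Rightarrow> 'a::real_normed_vector" and f :: "'a \<Rightarrow> 'b::metric_space"
  assumes f: "uniformly_continuous_on K f" and L: "simplex_param y n ` S \<subseteq> K"
  shows "\<forall>e>0. \<exists>d>0. \<forall>t\<in>S. \<forall>t'\<in>S. (\<forall>i<n. \<bar>t i - t' i\<bar> < d) \<longrightarrow>
           dist (f (simplex_param y n t)) (f (simplex_param y n t')) < e"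
proof (intro allI impI)
  fix e :: real assume "0 < e"
  then obtain d where d: "0 < d"
    and fd: "\<forall>x\<in>K. \<forall>x'\<in>K. dist x' x < d \<longrightarrow> dist (f x') (f x) < e"
    using f unfolding uniformly_continuous_on_def by blast
  define B where "B = (\<Sum>i<n. norm (y (Suc i) - y 0))"
  have B: "0 \<le> B" by (simp add: B_def sum_nonneg)
  have lip: "norm (simplex_param y n s - simplex_param y n s') \<le> \<delta> * B"
    if "\<forall>i<n. \<bar>s i - s' i\<bar> \<le> \<delta>" for s s' \<delta>
    using simplex_param_lipschitz[OF that] by (simp add: B_def)
  have "dist (f (simplex_param y n t)) (f (simplex_param y n t')) < e"
    if "t \<in> S" "t' \<in> S" "\<forall>i<n. \<bar>t i - t' i\<bar> < d / (B + 1)" for t t'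
  proof -
    have "norm (simplex_param y n t - simplex_param y n t') \<le> d / (B + 1) * B"
      using that(3) by (intro lip) (simp add: less_imp_le)
    also have "\<dots> < d" using d B by (simp add: field_simps)
    finally show ?thesis using fd L that(1,2) by (simp add: dist_norm image_subset_iff)
  qed
  then show "\<exists>d>0. \<forall>t\<in>S. \<forall>t'\<in>S. (\<forall>i<n. \<bar>t i - t' i\<bar> < d) \<longrightarrow>
      dist (f (simplex_param y n t)) (f (simplex_param y n t')) < e"
    using d B by (intro exI[of _ "d / (B + 1)"]) auto
qed

lemma norm_convex_combination_diff_le:
  fixes y :: "'b \<Rightarrow> 'a::real_normed_vector"
  assumes "\<forall>j\<in>I. 0 \<le> lam j" "(\<Sum>j\<in>I. lam j) = 1"
    and "\<forall>j\<in>I. lam j \<noteq> 0 \<longrightarrow> norm (y j - x) \<le> \<epsilon>"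
  shows "norm ((\<Sum>j\<in>I. lam j *\<^sub>R y j) - x) \<le> \<epsilon>"
proof -
  have "(\<Sum>j\<in>I. lam j *\<^sub>R y j) - x = (\<Sum>j\<in>I. lam j *\<^sub>R (y j - x))"
    using assms(2) by (simp add: scaleR_diff_right sum_subtractf flip: scaleR_sum_left)
  also have "norm \<dots> \<le> (\<Sum>j\<in>I. lam j * \<epsilon>)"
  proof (rule order_trans[OF norm_sum sum_mono])
    show "norm (lam j *\<^sub>R (y j - x)) \<le> lam j * \<epsilon>" if "j \<in> I" for j
      using assms(1,3) that by (cases "lam j = 0") (auto intro: mult_left_mono)
  qed
  also have "\<dots> = \<epsilon>" using assms(2) by (simp flip: sum_distrib_right)
  finally show ?thesis .
qed

lemma compact_finite_net:
  fixes K :: "'a::metric_space set"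
  assumes "compact K" "K \<noteq> {}" "0 < \<epsilon>"
  obtains n y where "\<forall>j<Suc n. y j \<in> K" "\<forall>x\<in>K. \<exists>j<Suc n. dist x (y j) < \<epsilon>"
proof -
  obtain F where F: "finite F" "F \<subseteq> K" "K \<subseteq> (\<Union>x\<in>F. ball x \<epsilon>)"
    using compactE_image[OF assms(1), of K "\<lambda>x. ball x \<epsilon>"] assms(3) by force
  then have "F \<noteq> {}" using assms(2) by auto
  then obtain n where "card F = Suc n" using F(1) by (metis card_gt_0_iff gr0_implies_Suc)
  then obtain y where "bij_betw y {..<Suc n} F"
    using ex_bij_betw_nat_finite[OF F(1)] by (metis lessThan_atLeast0)
  then have y: "y ` {..<Suc n} = F" by (simp add: bij_betw_def)
  have "\<exists>j<Suc n. dist x (y j) < \<epsilon>" if x: "x \<in> K" for x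
  proof -
    obtain j where "j < Suc n" "x \<in> ball (y j) \<epsilon>" using F(3) y x by auto
    then show ?thesis by (auto simp: dist_commute)
  qed
  moreover have "\<forall>j<Suc n. y j \<in> K" using y F(2) by auto
  ultimately show ?thesis using that by blast
qed

(* Schauder's projection: the weights form a partition of unity subordinate to the
   \<epsilon>-balls around the net points. *)
lemma schauder_projection:
  fixes K :: "'a::real_normed_vector set" and y :: "nat \<Rightarrow> 'a"
  assumes cover: "\<forall>x\<in>K. \<exists>j<Suc n. dist x (y j) < \<epsilon>"
  obtains lam :: "nat \<Rightarrow> 'a \<Rightarrow> real" where
    "\<And>j. continuous_on K (lam j)" "\<And>j x. 0 \<le> lam j x"
    "\<And>x. x \<in> K \<Longrightarrow> (\<Sum>j<Suc n. lam j x) = 1"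
    "\<And>x. x \<in> K \<Longrightarrow> norm ((\<Sum>j<Suc n. lam j x *\<^sub>R y j) - x) \<le> \<epsilon>"
proof -
  define w where "w j x = max 0 (\<epsilon> - dist x (y j))" for j x
  define W where "W x = (\<Sum>j<Suc n. w j x)" for x
  have w_nonneg: "0 \<le> w j x" for j x by (simp add: w_def)
  have W_pos: "0 < W x" if x: "x \<in> K" for x
  proof -
    obtain j where j: "j < Suc n" "dist x (y j) < \<epsilon>" using cover x by blast
    have "0 < w j x" using j(2) by (simp add: w_def)
    also have "w j x \<le> W x" unfolding W_def using j(1) w_nonneg by (intro member_le_sum) auto
    finally show ?thesis .
  qed
  have w_cont: "continuous_on K (w j)" for j
    unfolding w_def by (intro continuous_intros)
  have W_cont: "continuous_on K W"
    unfolding W_def by (intro continuous_on_sum w_cont)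
  define lam where "lam j x = w j x / W x" for j x
  have lam_cont: "continuous_on K (lam j)" for j
    unfolding lam_def by (rule continuous_on_divide[OF w_cont W_cont]) (use W_pos in force)
  have lam_nonneg: "0 \<le> lam j x" for j x by (simp add: lam_def W_def sum_nonneg w_nonneg)
  have lam_sum: "(\<Sum>j<Suc n. lam j x) = 1" if "x \<in> K" for x
    using W_pos[OF that] by (simp add: lam_def W_def flip: sum_divide_distrib)
  have "norm (y j - x) \<le> \<epsilon>" if "lam j x \<noteq> 0" for j x
    using that by (auto simp: lam_def w_def dist_norm norm_minus_commute split: if_splits)
  then have lam_close: "norm ((\<Sum>j<Suc n. lam j x *\<^sub>R y j) - x) \<le> \<epsilon>" if "x \<in> K" for x
    using lam_nonneg lam_sum[OF that] by (intro norm_convex_combination_diff_le) auto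
  show ?thesis using lam_cont lam_nonneg lam_sum lam_close by (rule that)
qed

lemma uniformly_continuous_on_finite_family:
  fixes g :: "nat \<Rightarrow> 'a::metric_space \<Rightarrow> real"
  assumes "\<forall>i<n. uniformly_continuous_on K (g i)"
  shows "\<forall>e>0. \<exists>d>0. \<forall>x\<in>K. \<forall>x'\<in>K. dist x x' < d \<longrightarrow> (\<forall>i<n. \<bar>g i x - g i x'\<bar> < e)"
  using assms
proof (induction n)
  case 0
  then show ?case by (auto intro: exI[of _ 1])
next
  case (Suc n)
  show ?case
  proof (intro allI impI)
    fix e :: real assume e: "0 < e"
    obtain d1 where d1: "0 < d1"
      "\<forall>x\<in>K. \<forall>x'\<in>K. dist x x' < d1 \<longrightarrow> (\<forall>i<n. \<bar>g i x - g i x'\<bar> < e)"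
      using Suc e by auto
    obtain d2 where d2: "0 < d2" "\<forall>x\<in>K. \<forall>x'\<in>K. dist x' x < d2 \<longrightarrow> dist (g n x') (g n x) < e"
      using Suc.prems e unfolding uniformly_continuous_on_def by (meson lessI)
    have "\<forall>x\<in>K. \<forall>x'\<in>K. dist x x' < min d1 d2 \<longrightarrow> (\<forall>i<Suc n. \<bar>g i x - g i x'\<bar> < e)"
      using d1(2) d2(2) by (auto simp: less_Suc_eq dist_real_def dist_commute)
    then show "\<exists>d>0. \<forall>x\<in>K. \<forall>x'\<in>K. dist x x' < d \<longrightarrow> (\<forall>i<Suc n. \<bar>g i x - g i x'\<bar> < e)"
      using d1(1) d2(1) by (metis min_less_iff_conj)
  qed
qed

lemma uniformly_continuous_coords_comp:
  fixes F :: "(nat \<Rightarrow> real) \<Rightarrow> 'a::metric_space" and g :: "'a \<Rightarrow> nat \<Rightarrow> real"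
  assumes g: "\<forall>i<n. uniformly_continuous_on K (\<lambda>x. g x i)" and F: "F ` S \<subseteq> K"
    and F_uc: "\<forall>e>0. \<exists>d>0. \<forall>t\<in>S. \<forall>t'\<in>S. (\<forall>i<n. \<bar>t i - t' i\<bar> < d) \<longrightarrow> dist (F t) (F t') < e"
  shows "uniformly_continuous_coords n S (g \<circ> F)"
  unfolding uniformly_continuous_coords_def
proof (intro allI impI)
  fix e :: real assume "0 < e"
  then obtain d1 where "0 < d1"
    and d1: "\<forall>x\<in>K. \<forall>x'\<in>K. dist x x' < d1 \<longrightarrow> (\<forall>i<n. \<bar>g x i - g x' i\<bar> < e)"
    using uniformly_continuous_on_finite_family[of n K "\<lambda>i x. g x i"] g by blast
  then obtain d where "0 < d"
    and d: "\<forall>t\<in>S. \<forall>t'\<in>S. (\<forall>i<n. \<bar>t i - t' i\<bar> < d) \<longrightarrow> dist (F t) (F t') < d1"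
    using F_uc by blast
  then show "\<exists>d>0. \<forall>t\<in>S. \<forall>t'\<in>S. (\<forall>i<n. \<bar>t i - t' i\<bar> < d) \<longrightarrow>
      (\<forall>i<n. \<bar>(g \<circ> F) t i - (g \<circ> F) t' i\<bar> < e)"
    using d1 F by (metis comp_apply image_subset_iff)
qed

lemma compact_convex_simplex_approximation:
  fixes K :: "'a::real_normed_vector set"
  assumes K: "compact K" "convex K" "K \<noteq> {}" and \<epsilon>: "0 < \<epsilon>"
  obtains n y bary where "\<forall>j<Suc n. y j \<in> K" "\<forall>x\<in>K. bary x \<in> corner_simplex n"
    "\<forall>i<n. uniformly_continuous_on K (\<lambda>x. bary x i)"
    "\<forall>x\<in>K. norm (simplex_param y n (bary x) - x) \<le> \<epsilon>"
proof -
  obtain n y where y: "\<forall>j<Suc n. y j \<in> K" and net: "\<forall>x\<in>K. \<exists>j<Suc n. dist x (y j) < \<epsilon>"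
    using compact_finite_net[OF K(1,3) \<epsilon>] by blast
  obtain lam where lam_cont: "\<And>j. continuous_on K (lam j)" and lam_nonneg: "\<And>j x. 0 \<le> lam j x"
    and lam_sum: "\<And>x. x \<in> K \<Longrightarrow> (\<Sum>j<Suc n. lam j x) = 1"
    and lam_close: "\<And>x. x \<in> K \<Longrightarrow> norm ((\<Sum>j<Suc n. lam j x *\<^sub>R y j) - x) \<le> \<epsilon>"
    using schauder_projection[OF net] by blast
  define bary where "bary x = (\<lambda>i. lam (Suc i) x)" for x
  have bary_in: "\<forall>x\<in>K. bary x \<in> corner_simplex n"
    unfolding bary_def using shifted_weights_in_corner_simplex[OF lam_nonneg lam_sum] by blast
  have bary_uc: "\<forall>i<n. uniformly_continuous_on K (\<lambda>x. bary x i)"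
    using compact_uniformly_continuous[OF lam_cont K(1)] by (simp add: bary_def)
  have "simplex_param y n (bary x) = (\<Sum>j<Suc n. lam j x *\<^sub>R y j)" if "x \<in> K" for x
    unfolding bary_def by (rule simplex_param_barycentric[OF lam_sum[OF that]])
  then have "\<forall>x\<in>K. norm (simplex_param y n (bary x) - x) \<le> \<epsilon>"
    using lam_close by simp
  with y bary_in bary_uc show ?thesis by (rule that)
qed

lemma approx_fixpoint_compact_convex:
  fixes K :: "'a::real_normed_vector set"
  assumes K: "compact K" "convex K" "K \<noteq> {}" and f: "continuous_on K f" "f ` K \<subseteq> K"
    and \<epsilon>: "0 < \<epsilon>"
  shows "\<exists>x\<in>K. norm (f x - x) \<le> 2 * \<epsilon>"
proof -
  obtain n y bary where y: "\<forall>j<Suc n. y j \<in> K" and bary_in: "\<forall>x\<in>K. bary x \<in> corner_simplex n"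
    and bary_uc: "\<forall>i<n. uniformly_continuous_on K (\<lambda>x. bary x i)"
    and bary_close: "\<forall>x\<in>K. norm (simplex_param y n (bary x) - x) \<le> \<epsilon>"
    using compact_convex_simplex_approximation[OF K \<epsilon>] by blast
  let ?L = "simplex_param y n"
  define B where "B = (\<Sum>i<n. norm (y (Suc i) - y 0))"
  have B: "0 \<le> B" by (simp add: B_def sum_nonneg)
  have L_in: "?L t \<in> K" if "t \<in> corner_simplex n" for t
    using simplex_param_in_convex[OF K(2) y that] .
  have h_maps: "\<forall>t\<in>corner_simplex n. (bary \<circ> (f \<circ> ?L)) t \<in> corner_simplex n"
    using L_in f(2) bary_in by auto
  have "uniformly_continuous_coords n (corner_simplex n) (bary \<circ> (f \<circ> ?L))"
    using bary_uc L_in f(2)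
      uniformly_continuous_comp_simplex_param[OF compact_uniformly_continuous[OF f(1) K(1)]]
    by (intro uniformly_continuous_coords_comp) (auto simp: image_subset_iff)
  moreover have "0 < \<epsilon> / (B + 1)" using \<epsilon> B by simp
  ultimately obtain t where t: "t \<in> corner_simplex n"
    and t_fix: "\<forall>i<n. \<bar>bary (f (?L t)) i - t i\<bar> < \<epsilon> / (B + 1)"
    using approx_fixpoint_simplex[OF h_maps] by fastforce
  have "\<forall>i<n. \<bar>bary (f (?L t)) i - t i\<bar> \<le> \<epsilon> / (B + 1)" using t_fix by (simp add: less_imp_le)
  then have "norm (?L (bary (f (?L t))) - ?L t) \<le> \<epsilon> / (B + 1) * B"
    unfolding B_def by (rule simplex_param_lipschitz)
  also have "\<dots> \<le> \<epsilon>" using \<epsilon> B by (simp add: field_simps)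
  finally have near_x: "norm (?L (bary (f (?L t))) - ?L t) \<le> \<epsilon>" .
  have near_fx: "norm (?L (bary (f (?L t))) - f (?L t)) \<le> \<epsilon>"
    using bary_close L_in[OF t] f(2) by blast
  have "norm (f (?L t) - ?L t) \<le> 2 * \<epsilon>"
    using norm_triangle_ineq[of "f (?L t) - ?L (bary (f (?L t)))" "?L (bary (f (?L t))) - ?L t"]
      near_x near_fx by (simp add: norm_minus_commute)
  then show ?thesis using L_in[OF t] by blast
qed

theorem schauder_fixpoint:
  fixes K :: "'a::real_normed_vector set"
  assumes "compact K" "convex K" "K \<noteq> {}" "continuous_on K f" "f ` K \<subseteq> K"
  shows "\<exists>x\<in>K. f x = x"
proof -
  have "continuous_on K (\<lambda>x. norm (f x - x))" by (intro continuous_intros assms(4))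
  then obtain x where x: "x \<in> K" and min: "\<forall>z\<in>K. norm (f x - x) \<le> norm (f z - z)"
    using continuous_attains_inf[OF assms(1,3)] by blast
  have "norm (f x - x) \<le> 0 + \<epsilon>" if "0 < \<epsilon>" for \<epsilon>
    using approx_fixpoint_compact_convex[OF assms, of "\<epsilon> / 2"] min that by fastforce
  then have "norm (f x - x) \<le> 0" by (rule field_le_epsilon)
  then show ?thesis using x by auto
qed

section \<open>A Darbo-type fixed point theorem\<close>

lemma compact_if_closed_totally_bounded:
  fixes K :: "'a::complete_space set"
  assumes "closed K" "totally_bounded K"
  shows "compact K"
  using assms unfolding compact_eq_totally_bounded totally_bounded_metric
  by (simp add: complete_eq_closed ball_def)

definition conv_iterates :: "('a \<Rightarrow> 'a) \<Rightarrow> 'a::real_normed_vector set \<Rightarrow> nat \<Rightarrow> 'a set" where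
  "conv_iterates T A k = ((\<lambda>S. Conv (T ` S)) ^^ k) A"

lemma conv_iterates_0 [simp]: "conv_iterates T A 0 = A"
  by (simp add: conv_iterates_def)

lemma conv_iterates_Suc [simp]: "conv_iterates T A (Suc k) = Conv (T ` conv_iterates T A k)"
  by (simp add: conv_iterates_def)

lemma Conv_subset_closed_convex: "B \<subseteq> A \<Longrightarrow> closed A \<Longrightarrow> convex A \<Longrightarrow> Conv B \<subseteq> A"
  unfolding Conv_def by (meson closure_minimal hull_minimal)

lemma Conv_superset: "B \<subseteq> Conv B"
  unfolding Conv_def by (meson closure_subset hull_subset order_trans)

lemma conv_iterates_closed_convex:
  assumes "A \<noteq> {}" "closed A" "convex A" "T ` A \<subseteq> A"
  shows "conv_iterates T A k \<subseteq> A \<and> conv_iterates T A k \<noteq> {} \<and>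
    closed (conv_iterates T A k) \<and> convex (conv_iterates T A k)"
proof (induction k)
  case 0
  show ?case using assms(1-3) by simp
next
  case (Suc k)
  let ?C = "T ` conv_iterates T A k"
  have "?C \<subseteq> A" "?C \<noteq> {}" using Suc assms(4) by blast+
  then have "Conv ?C \<subseteq> A" "Conv ?C \<noteq> {}"
    using Conv_subset_closed_convex[OF _ assms(2,3)] Conv_superset[of ?C] by blast+
  moreover have "closed (Conv ?C)" "convex (Conv ?C)"
    by (simp_all add: Conv_def convex_closure)
  ultimately show ?case by simp
qed

lemma conv_iterates_decseq:
  assumes "closed A" "convex A" "T ` A \<subseteq> A"
  shows "conv_iterates T A (Suc k) \<subseteq> conv_iterates T A k"
proof (induction k)
  case 0
  show ?case using Conv_subset_closed_convex[OF assms(3,1,2)] by simp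
next
  case (Suc k)
  then show ?case unfolding conv_iterates_Suc Conv_def
    by (intro closure_mono hull_mono image_mono)
qed

lemma conv_iterates_Inter_invariant:
  assumes "T ` A \<subseteq> A"
  shows "T ` (\<Inter>k. conv_iterates T A k) \<subseteq> (\<Inter>k. conv_iterates T A k)"
proof -
  have "T x \<in> conv_iterates T A k" if "x \<in> (\<Inter>k. conv_iterates T A k)" for x k
  proof (cases k)
    case 0
    have "x \<in> A" using that by (metis INT_iff UNIV_I conv_iterates_0)
    then show ?thesis using 0 assms by auto
  next
    case (Suc j)
    then show ?thesis using that Conv_superset[of "T ` conv_iterates T A j"] by auto
  qed
  then show ?thesis by blast
qed

lemma le_iterates_tendsto_zero:
  fixes a :: "nat \<Rightarrow> real" and \<Psi> :: "real \<Rightarrow> real"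
  assumes a: "\<And>k. 0 \<le> a k" "\<And>k. a (Suc k) \<le> \<Psi> (a k)"
    and \<Psi>: "mono_on {0..} \<Psi>" "\<forall>t\<ge>0. (\<lambda>n. (\<Psi> ^^ n) t) \<longlonglongrightarrow> 0"
  shows "a \<longlonglongrightarrow> 0"
proof -
  have bound: "a k \<le> (\<Psi> ^^ k) (a 0)" for k
  proof (induction k)
    case (Suc k)
    have "a (Suc k) \<le> \<Psi> (a k)" by (rule a(2))
    also have "\<dots> \<le> \<Psi> ((\<Psi> ^^ k) (a 0))"
      using Suc a(1)[of k] by (intro mono_onD[OF \<Psi>(1)]) auto
    finally show ?case by simp
  qed simp
  have iterates: "(\<lambda>k. (\<Psi> ^^ k) (a 0)) \<longlonglongrightarrow> 0" using \<Psi>(2) a(1)[of 0] by simp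
  show ?thesis
    by (rule tendsto_sandwich[OF _ _ tendsto_const iterates]) (simp_all add: a(1) bound)
qed

lemma tendsto_zero_if_mono_positive:
  fixes \<theta> :: "real \<Rightarrow> real" and x :: "nat \<Rightarrow> real"
  assumes \<theta>: "mono_on {0..} \<theta>" "\<forall>s>0. 0 < \<theta> s"
    and x: "\<And>k. 0 \<le> x k" and lim: "(\<lambda>k. \<theta> (x k)) \<longlonglongrightarrow> 0"
  shows "x \<longlonglongrightarrow> 0"
proof (rule LIMSEQ_I)
  fix r :: real assume r: "0 < r"
  then obtain k0 where k0: "\<forall>k\<ge>k0. norm (\<theta> (x k) - 0) < \<theta> r"
    using LIMSEQ_D[OF lim] \<theta>(2) by blast
  have "x k < r" if "k0 \<le> k" for k
  proof (rule ccontr)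
    assume "\<not> x k < r"
    then have "\<theta> r \<le> \<theta> (x k)" using r by (intro mono_onD[OF \<theta>(1)]) auto
    then show False using k0 that by force
  qed
  then have "norm (x k - 0) < r" if "k0 \<le> k" for k using x[of k] that by simp
  then show "\<exists>k0. \<forall>k\<ge>k0. norm (x k - 0) < r" by blast
qed

lemma mnc_nonneg: "measure_of_noncompactness mu \<Longrightarrow> B \<in> bdd_sets \<Longrightarrow> 0 \<le> mu B"
  by (simp add: measure_of_noncompactness_def)

lemma mnc_Conv: "measure_of_noncompactness mu \<Longrightarrow> B \<in> bdd_sets \<Longrightarrow> mu (Conv B) = mu B"
  by (simp add: measure_of_noncompactness_def)

lemma mnc_Inter_precompact:
  fixes mu :: "'a::real_normed_vector set \<Rightarrow> real" and Bs :: "nat \<Rightarrow> 'a set"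
  assumes mnc: "measure_of_noncompactness mu"
    and "\<And>n. Bs n \<in> bdd_sets" "\<And>n. closed (Bs n)" "\<And>n. Bs (Suc n) \<subseteq> Bs n"
    and "(\<lambda>n. mu (Bs n)) \<longlonglongrightarrow> 0"
  shows "(\<Inter>n. Bs n) \<noteq> {} \<and> precompact (\<Inter>n. Bs n)"
proof -
  from mnc have "\<forall>Bs :: nat \<Rightarrow> 'a set.
      (\<forall>n. Bs n \<in> bdd_sets \<and> closed (Bs n) \<and> Bs (Suc n) \<subseteq> Bs n) \<and> (\<lambda>n. mu (Bs n)) \<longlonglongrightarrow> 0 \<longrightarrow>
      (\<Inter>n. Bs n) \<noteq> {} \<and> precompact (\<Inter>n. Bs n)"
    unfolding measure_of_noncompactness_def by (elim conjE)
  then show ?thesis using assms(2-5) by blast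
qed

theorem darbo_type_fixpoint:
  fixes mu :: "'a::banach set \<Rightarrow> real" and \<theta> \<Psi> :: "real \<Rightarrow> real"
  assumes mnc: "measure_of_noncompactness mu"
    and A: "A \<noteq> {}" "closed A" "bounded A" "convex A"
    and T: "continuous_on A T" "T ` A \<subseteq> A"
    and \<theta>: "mono_on {0..} \<theta>" "\<forall>s\<ge>0. 0 \<le> \<theta> s" "\<forall>s>0. 0 < \<theta> s"
    and \<Psi>: "mono_on {0..} \<Psi>" "\<forall>t\<ge>0. (\<lambda>n. (\<Psi> ^^ n) t) \<longlonglongrightarrow> 0"
    and contr: "\<forall>Y. Y \<noteq> {} \<and> Y \<subseteq> A \<longrightarrow> \<theta> (mu (T ` Y)) \<le> \<Psi> (\<theta> (mu Y))"
  shows "\<exists>x\<in>A. T x = x"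
proof -
  let ?As = "conv_iterates T A"
  have As: "?As k \<subseteq> A" "?As k \<noteq> {}" "closed (?As k)" "convex (?As k)" for k
    using conv_iterates_closed_convex[OF A(1,2,4) T(2)] by blast+
  have bdd: "S \<in> bdd_sets" if "S \<noteq> {}" "S \<subseteq> A" for S
    using that A(3) bounded_subset by (auto simp: bdd_sets_def)
  have TAs: "T ` ?As k \<noteq> {}" "T ` ?As k \<subseteq> A" for k
    using As T(2) by blast+
  have mu_nonneg: "0 \<le> mu (?As k)" for k
    using mnc_nonneg[OF mnc bdd[OF As(2,1)]] .
  have "(\<lambda>k. \<theta> (mu (?As k))) \<longlonglongrightarrow> 0"
  proof (rule le_iterates_tendsto_zero[OF _ _ \<Psi>])
    show "0 \<le> \<theta> (mu (?As k))" for k using \<theta>(2) mu_nonneg by blast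
    show "\<theta> (mu (?As (Suc k))) \<le> \<Psi> (\<theta> (mu (?As k)))" for k
      using mnc_Conv[OF mnc bdd[OF TAs]] contr As(1,2) by simp
  qed
  then have mu_lim: "(\<lambda>k. mu (?As k)) \<longlonglongrightarrow> 0"
    by (rule tendsto_zero_if_mono_positive[OF \<theta>(1,3) mu_nonneg])
  define K where "K = (\<Inter>k. ?As k)"
  have K: "K \<noteq> {}" "precompact K"
    using mnc_Inter_precompact[OF mnc bdd[OF As(2,1)] As(3)
        conv_iterates_decseq[OF A(2,4) T(2)] mu_lim]
    unfolding K_def by blast+
  have K_closed: "closed K" and K_convex: "convex K"
    unfolding K_def using As by (auto intro: closed_INT convex_INT)
  have K_sub: "K \<subseteq> A" unfolding K_def by (metis INT_lower UNIV_I conv_iterates_0)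
  have K_compact: "compact K" using K_closed K(2) by (rule compact_if_closed_totally_bounded)
  have T_cont: "continuous_on K T" using T(1) K_sub by (rule continuous_on_subset)
  have T_inv: "T ` K \<subseteq> K"
    unfolding K_def by (rule conv_iterates_Inter_invariant[OF T(2)])
  obtain x where "x \<in> K" "T x = x"
    using schauder_fixpoint[OF K_compact K_convex K(1) T_cont T_inv] by blast
  then show ?thesis using K_sub by blast
qed

theorem mainTheorem1:
  fixes mu :: "'a::banach set \<Rightarrow> real"
    and A :: "'a set"
    and T :: "'a \<Rightarrow> 'a"
    and \<Psi> \<Phi> \<phi> :: "real \<Rightarrow> real"
  assumes mnc: "measure_of_noncompactness mu"
    and A: "A \<noteq> {}" "closed A" "bounded A" "convex A"
    and T: "continuous_on A T" "T ` A \<subseteq> A"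
    and Psi_range: "\<forall>t\<ge>0. \<Psi> t \<ge> 0"
    and Psi_mono: "mono_on {0..} \<Psi>"
    and Psi_concave: "concave_on {0..} \<Psi>"
    and Psi_iter: "\<forall>t\<ge>0. (\<lambda>n. (\<Psi> ^^ n) t) \<longlonglongrightarrow> 0"
    and Phi_range: "\<forall>t\<ge>0. \<Phi> t \<ge> 0"
    and Phi_mono: "mono_on {0..} \<Phi>"
    and Phi_subadd: "\<forall>s\<ge>0. \<forall>t\<ge>0. \<Phi> (s + t) \<le> \<Phi> s + \<Phi> t"
    and Phi_ge: "\<forall>t\<ge>0. \<Phi> t \<ge> t"
    and Phi_lim: "\<forall>x :: nat \<Rightarrow> real. (\<forall>n. x n \<ge> 0) \<longrightarrow>
                    (((\<lambda>n. \<Phi> (x n)) \<longlonglongrightarrow> 0) \<longleftrightarrow> (x \<longlonglongrightarrow> 0))"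
    and phi_range: "\<forall>t\<ge>0. \<phi> t \<ge> 0"
    and phi_int: "\<forall>K. compact K \<and> K \<subseteq> {0..} \<longrightarrow> \<phi> absolutely_integrable_on K"
    and phi_pos: "\<forall>\<epsilon>>0. integral {0..\<epsilon>} \<phi> > 0"
    and contr: "\<forall>Y. Y \<noteq> {} \<and> Y \<subseteq> A \<longrightarrow>
                  \<Phi> (integral {0..mu (T ` Y)} \<phi>) \<le> \<Psi> (integral {0..mu Y} \<phi>)"
  shows "\<exists>x\<in>A. T x = x"
proof -
  define \<theta> where "\<theta> s = integral {0..s} \<phi>" for s
  have \<phi>_integrable: "\<phi> integrable_on {0..s}" for s
    using phi_int by (simp add: absolutely_integrable_on_def)
  have \<theta>_nonneg: "0 \<le> \<theta> s" for s
    unfolding \<theta>_def using \<phi>_integrable phi_range by (auto intro: integral_nonneg)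
  have \<theta>_mono: "mono_on {0..} \<theta>"
    unfolding \<theta>_def using \<phi>_integrable phi_range
    by (intro mono_onI integral_subset_le) auto
  have \<theta>_pos: "\<forall>s>0. 0 < \<theta> s" using phi_pos by (simp add: \<theta>_def)
  have "\<forall>Y. Y \<noteq> {} \<and> Y \<subseteq> A \<longrightarrow> \<theta> (mu (T ` Y)) \<le> \<Psi> (\<theta> (mu Y))"
  proof (intro allI impI)
    fix Y assume Y: "Y \<noteq> {} \<and> Y \<subseteq> A"
    have "\<theta> (mu (T ` Y)) \<le> \<Phi> (\<theta> (mu (T ` Y)))" using Phi_ge \<theta>_nonneg by blast
    also have "\<dots> \<le> \<Psi> (\<theta> (mu Y))" using contr Y unfolding \<theta>_def by blast
    finally show "\<theta> (mu (T ` Y)) \<le> \<Psi> (\<theta> (mu Y))" .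
  qed
  moreover have "\<forall>s\<ge>0. 0 \<le> \<theta> s" using \<theta>_nonneg by blast
  ultimately show ?thesis
    using darbo_type_fixpoint[OF mnc A T \<theta>_mono _ \<theta>_pos Psi_mono Psi_iter] by blast
qed

end
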